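(* For all $n\ge 1$, $w\text{-}sat(Q_n,Q_2)=2^n-1$.
   Context: $Q_n$ is the hypercube on $\{0,1\}^n$ with edges between vertices differing in exactly one coordinate; $Q_2$ is the 4-cycle. A graph $G\subseteq Q_n$ (on the full vertex set $\{0,1\}^n$) is $(Q_n,Q_2)$-weakly-saturated if the edges of $E(Q_n)\setminus E(G)$ can be added one at a time, in some order, so that each newly added edge creates at least one new subgraph isomorphic to $Q_2$ (in the current graph). $w\text{-}sat(Q_n,Q_2)$ is the minimum number of edges of a $(Q_n,Q_2)$-weakly-saturated graph. *)

theory Defs
  imports Main
begin

text \<open>Vertices of Q_n: subsets of {0..<n} (identified with 0/1-vectors of length n).
 Edges are unordered pairs {A, insert i A} with i < n, i not in A (differ in one coordinate).\<close>

definition hypercube_vertices :: "nat \<Rightarrow> nat set set" where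
  "hypercube_vertices n = Pow {..<n}"

definition hypercube_edges :: "nat \<Rightarrow> nat set set set" where
  "hypercube_edges n = {{A, insert i A} | A i. A \<subseteq> {..<n} \<and> i < n \<and> i \<notin> A}"

definition C4_copies :: "'v set set \<Rightarrow> 'v set set set" where
  "C4_copies H = {{{a,b},{b,c},{c,d},{d,a}} | a b c d.
       distinct [a,b,c,d] \<and> {a,b} \<in> H \<and> {b,c} \<in> H \<and> {c,d} \<in> H \<and> {d,a} \<in> H}"

definition creates_new_C4 :: "'v set set \<Rightarrow> 'v set \<Rightarrow> bool" where
  "creates_new_C4 H e \<longleftrightarrow> (\<exists>C \<in> C4_copies (insert e H). C \<notin> C4_copies H)"

definition weakly_saturated :: "nat \<Rightarrow> nat set set set \<Rightarrow> bool" where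
  "weakly_saturated n G \<longleftrightarrow> G \<subseteq> hypercube_edges n \<and>
     (\<exists>es. distinct es \<and> set es = hypercube_edges n - G \<and>
        (\<forall>k < length es. creates_new_C4 (G \<union> set (take k es)) (es ! k)))"

definition wsat_Qn_Q2 :: "nat \<Rightarrow> nat" where
  "wsat_Qn_Q2 n = (LEAST m. \<exists>G. weakly_saturated n G \<and> card G = m)"

end

theory Submission
  imports Defs
begin

(* For a vertex set V and an edge set E, call S \<subseteq> V closed if no edge of E
   separates S from V - S; these are the unions of connected components.  Adding one edge
   at most halves the number of closed sets, so 2^|V| \<le> 2^|E| * #closed(E).  An edge that
   creates a new 4-cycle joins two vertices already connected by a path of length three,
   so it does not change the closed sets at all.  Hence a weakly saturated G has the same
   closed sets as the connected graph Q_n, namely {} and V, and 2^(2^n) \<le> 2^|G| * 2.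

   The spanning tree T_n with edges {B - {max B}, B} (B \<noteq> {}) has 2^n - 1
   edges.  Adding the remaining edges {A, A + i} in order of increasing |A| works: with
   m = max A > i, the cycle A, A + i, A + i - m, A - m consists of two tree edges and an
   edge that is a tree edge or has a lower endpoint smaller than A. *)

section \<open>Closed vertex sets\<close>

definition closed_sets :: "'v set \<Rightarrow> 'v set set \<Rightarrow> 'v set set" where
  "closed_sets V E = {S. S \<subseteq> V \<and> (\<forall>a b. {a,b} \<in> E \<longrightarrow> (a \<in> S \<longleftrightarrow> b \<in> S))}"

lemma closed_sets_edge: "S \<in> closed_sets V E \<Longrightarrow> {a,b} \<in> E \<Longrightarrow> (a \<in> S \<longleftrightarrow> b \<in> S)"
  unfolding closed_sets_def by blast

lemma closed_sets_empty: "closed_sets V {} = Pow V"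
  by (auto simp: closed_sets_def)

text \<open>One more edge at most halves the number of closed sets: the symmetric difference with
  a fixed set \<open>g\<close> crossed by the new edge maps the lost closed sets injectively into the
  remaining ones.\<close>

lemma card_closed_sets_insert:
  assumes "finite V"
  shows "card (closed_sets V E) \<le> 2 * card (closed_sets V (insert e E))"
proof -
  let ?F = "closed_sets V E" and ?F' = "closed_sets V (insert e E)"
  have sub: "?F' \<subseteq> ?F" by (auto simp: closed_sets_def)
  have finF: "finite ?F" by (rule finite_subset[of _ "Pow V"]) (auto simp: closed_sets_def assms)
  have finF': "finite ?F'" using finF sub finite_subset by blast
  show ?thesis
  proof (cases "?F \<subseteq> ?F'")
    case True
    then have "card ?F \<le> card ?F'" using card_mono[OF finF'] by blast
    then show ?thesis by simp
  next
    case False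
    then obtain g where g: "g \<in> ?F" "g \<notin> ?F'" by blast
    then obtain a b where ab: "e = {a,b}" "\<not> (a \<in> g \<longleftrightarrow> b \<in> g)"
      by (auto simp: closed_sets_def)
    define h where "h S = (S - g) \<union> (g - S)" for S
    have img: "h ` (?F - ?F') \<subseteq> ?F'"
    proof
      fix T assume "T \<in> h ` (?F - ?F')"
      then obtain S where S: "S \<in> ?F" "S \<notin> ?F'" and T: "T = h S" by blast
      have crossS: "\<not> (a \<in> S \<longleftrightarrow> b \<in> S)"
        using S by (auto simp: closed_sets_def ab(1) doubleton_eq_iff)
      have "a \<in> T \<longleftrightarrow> b \<in> T" using crossS ab(2) unfolding T h_def by blast
      then show "T \<in> ?F'"
        using S(1) g(1) unfolding T h_def closed_sets_def ab(1)
        by (auto simp: doubleton_eq_iff)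
    qed
    have "inj_on h (?F - ?F')" by (rule inj_onI) (auto simp: h_def)
    then have "card (?F - ?F') \<le> card ?F'" using card_inj_on_le img finF' by blast
    moreover have "card ?F = card ?F' + card (?F - ?F')"
      using card_Diff_subset[OF finF' sub] card_mono[OF finF sub] by simp
    ultimately show ?thesis by simp
  qed
qed

text \<open>Counting form of "a graph has at least \<open>|V| - |E|\<close> components".\<close>

lemma card_Pow_le_closed_sets:
  assumes "finite V" "finite E"
  shows "card (Pow V) \<le> 2 ^ card E * card (closed_sets V E)"
  using assms(2)
proof (induction E rule: finite_induct)
  case empty
  then show ?case by (simp add: closed_sets_empty)
next
  case (insert e E)
  have "card (Pow V) \<le> 2 ^ card E * card (closed_sets V E)" by fact
  also have "\<dots> \<le> 2 ^ card E * (2 * card (closed_sets V (insert e E)))"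
    using card_closed_sets_insert[OF assms(1)] by simp
  finally show ?case using insert by simp
qed

section \<open>Edges that close a 4-cycle\<close>

definition closes_C4 :: "'v set set \<Rightarrow> 'v set \<Rightarrow> bool" where
  "closes_C4 H e \<longleftrightarrow> e \<notin> H \<and>
     (\<exists>a b c d. distinct [a,b,c,d] \<and> e = {a,b} \<and> {b,c} \<in> H \<and> {c,d} \<in> H \<and> {d,a} \<in> H)"

lemma closes_C4I:
  "e \<notin> H \<Longrightarrow> distinct [a,b,c,d] \<Longrightarrow> e = {a,b} \<Longrightarrow> {b,c} \<in> H \<Longrightarrow> {c,d} \<in> H \<Longrightarrow> {d,a} \<in> H
   \<Longrightarrow> closes_C4 H e"
  unfolding closes_C4_def by blast

lemma closes_C4_mono: "closes_C4 H e \<Longrightarrow> H \<subseteq> H' \<Longrightarrow> e \<notin> H' \<Longrightarrow> closes_C4 H' e"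
  unfolding closes_C4_def by blast

lemma C4_copiesI:
  "distinct [a,b,c,d] \<Longrightarrow> {a,b} \<in> H \<Longrightarrow> {b,c} \<in> H \<Longrightarrow> {c,d} \<in> H \<Longrightarrow> {d,a} \<in> H
   \<Longrightarrow> {{a,b},{b,c},{c,d},{d,a}} \<in> C4_copies H"
  unfolding C4_copies_def by blast

lemma C4_copies_subset: "C \<in> C4_copies H \<Longrightarrow> C \<subseteq> H"
  unfolding C4_copies_def by blast

text \<open>Adding \<open>e\<close> creates a new copy of \<open>Q_2\<close> exactly when \<open>e\<close> closes a 4-cycle: the new copy
  must use \<open>e\<close>, and rotating the cycle puts \<open>e\<close> in front.\<close>

lemma creates_new_C4_iff: "creates_new_C4 H e \<longleftrightarrow> closes_C4 H e"
proof
  assume "creates_new_C4 H e"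
  then obtain C where C_new: "C \<in> C4_copies (insert e H)" "C \<notin> C4_copies H"
    unfolding creates_new_C4_def by blast
  then obtain a b c d where C: "C = {{a,b},{b,c},{c,d},{d,a}}" and dist: "distinct [a,b,c,d]"
    and edges: "{a,b} \<in> insert e H" "{b,c} \<in> insert e H" "{c,d} \<in> insert e H" "{d,a} \<in> insert e H"
    unfolding C4_copies_def by blast
  have eH: "e \<notin> H" using C_new by (auto simp: insert_absorb)
  have not_old: "\<not> ({a,b} \<in> H \<and> {b,c} \<in> H \<and> {c,d} \<in> H \<and> {d,a} \<in> H)"
    using C_new(2) C4_copiesI[OF dist] C by blast
  have ne: "{a,b} \<noteq> {b,c}" "{a,b} \<noteq> {c,d}" "{a,b} \<noteq> {d,a}" "{b,c} \<noteq> {c,d}"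
    "{b,c} \<noteq> {d,a}" "{c,d} \<noteq> {d,a}" using dist by (auto simp: doubleton_eq_iff)
  consider "e = {a,b}" | "e = {b,c}" | "e = {c,d}" | "e = {d,a}"
    using edges not_old unfolding insert_iff by fast
  then show "closes_C4 H e"
  proof cases
    case 1
    then show ?thesis using eH dist edges ne by (intro closes_C4I[of e H a b c d]) auto
  next
    case 2
    then show ?thesis using eH dist edges ne by (intro closes_C4I[of e H b c d a]) auto
  next
    case 3
    then show ?thesis using eH dist edges ne by (intro closes_C4I[of e H c d a b]) auto
  next
    case 4
    then show ?thesis using eH dist edges ne by (intro closes_C4I[of e H d a b c]) auto
  qed
next
  assume "closes_C4 H e"
  then obtain a b c d where dist: "distinct [a,b,c,d]" and e: "e = {a,b}" and eH: "e \<notin> H"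
    and path: "{b,c} \<in> H" "{c,d} \<in> H" "{d,a} \<in> H"
    unfolding closes_C4_def by blast
  let ?C = "{{a,b},{b,c},{c,d},{d,a}}"
  have "?C \<in> C4_copies (insert e H)" using C4_copiesI[OF dist] e path by simp
  moreover have "?C \<notin> C4_copies H" using C4_copies_subset e eH by blast
  ultimately show "creates_new_C4 H e" unfolding creates_new_C4_def by blast
qed

text \<open>An edge closing a 4-cycle is already implied by connectivity.\<close>

lemma closed_sets_insert_closing:
  assumes "closes_C4 H e"
  shows "closed_sets V (insert e H) = closed_sets V H"
proof
  show "closed_sets V (insert e H) \<subseteq> closed_sets V H" by (auto simp: closed_sets_def)
next
  from assms obtain a b c d where e: "e = {a,b}" and path: "{b,c} \<in> H" "{c,d} \<in> H" "{d,a} \<in> H"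
    unfolding closes_C4_def by blast
  show "closed_sets V H \<subseteq> closed_sets V (insert e H)"
  proof
    fix S assume S: "S \<in> closed_sets V H"
    have "a \<in> S \<longleftrightarrow> b \<in> S"
      using closed_sets_edge[OF S path(1)] closed_sets_edge[OF S path(2)]
        closed_sets_edge[OF S path(3)] by blast
    then show "S \<in> closed_sets V (insert e H)"
      using S unfolding closed_sets_def e by (auto simp: doubleton_eq_iff)
  qed
qed

lemma closed_sets_saturation:
  assumes "\<forall>k < length es. creates_new_C4 (G \<union> set (take k es)) (es ! k)"
  shows "closed_sets V (G \<union> set es) = closed_sets V G"
  using assms
proof (induction es rule: rev_induct)
  case Nil
  then show ?case by simp
next
  case (snoc x es)
  have prefix: "\<forall>k < length es. creates_new_C4 (G \<union> set (take k es)) (es ! k)"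
  proof (intro allI impI)
    fix k assume "k < length es"
    then show "creates_new_C4 (G \<union> set (take k es)) (es ! k)"
      using snoc.prems[rule_format, of k] by (simp add: nth_append)
  qed
  have "creates_new_C4 (G \<union> set es) x"
    using snoc.prems[rule_format, of "length es"] by simp
  then have "closed_sets V (insert x (G \<union> set es)) = closed_sets V (G \<union> set es)"
    by (simp add: creates_new_C4_iff closed_sets_insert_closing)
  then show ?case using snoc.IH[OF prefix] by simp
qed

lemma closing_order_by_rank:
  fixes rk :: "'v set \<Rightarrow> 'r::linorder"
  assumes "finite R" and closes: "\<forall>e\<in>R. closes_C4 (H \<union> {e'\<in>R. rk e' < rk e}) e"
  shows "\<exists>es. distinct es \<and> set es = R \<and> (\<forall>k < length es. closes_C4 (H \<union> set (take k es)) (es ! k))"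
proof -
  obtain xs where xs: "set xs = R" "distinct xs" using finite_distinct_list[OF assms(1)] by blast
  define es where "es = sort_key rk xs"
  have es: "set es = R" "distinct es" "sorted (map rk es)" using xs by (simp_all add: es_def)
  have "closes_C4 (H \<union> set (take k es)) (es ! k)" if k: "k < length es" for k
  proof (rule closes_C4_mono)
    show closes_k: "closes_C4 (H \<union> {e'\<in>R. rk e' < rk (es ! k)}) (es ! k)"
      using closes k es(1) nth_mem by blast
    have "e' \<in> set (take k es)" if e': "e' \<in> R" "rk e' < rk (es ! k)" for e'
    proof -
      obtain j where j: "j < length es" "e' = es ! j" using e'(1) es(1) by (metis in_set_conv_nth)
      have "j < k" \<comment> \<open>sortedness: a smaller rank cannot sit at a later position\<close>
        using sorted_nth_mono[OF es(3), of k j] j k e'(2) by (metis leI length_map not_le nth_map)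
      then show ?thesis using j k by (auto simp: in_set_conv_nth)
    qed
    then show "H \<union> {e'\<in>R. rk e' < rk (es ! k)} \<subseteq> H \<union> set (take k es)" by blast
    have "es ! k \<notin> set (take k es)"
      using es(2) k by (simp add: in_set_conv_nth nth_eq_iff_index_eq)
    then show "es ! k \<notin> H \<union> set (take k es)" using closes_k by (simp add: closes_C4_def)
  qed
  then show ?thesis using es by blast
qed

section \<open>The hypercube\<close>

lemma hypercube_edges_iff:
  "e \<in> hypercube_edges n \<longleftrightarrow> (\<exists>A i. e = {A, insert i A} \<and> A \<subseteq> {..<n} \<and> i < n \<and> i \<notin> A)"
  by (auto simp: hypercube_edges_def)

lemma finite_hypercube_edges: "finite (hypercube_edges n)"
  by (rule finite_subset[of _ "Pow (Pow {..<n})"]) (auto simp: hypercube_edges_def)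

text \<open>\<open>Q_n\<close> is connected: every closed set contains all vertices or none, since each vertex
  is joined to \<open>{}\<close> by removing its elements one at a time.\<close>

lemma closed_sets_hypercube:
  assumes S: "S \<in> closed_sets (Pow {..<n}) (hypercube_edges n)"
  shows "S = {} \<or> S = Pow {..<n}"
proof -
  have "A \<in> S \<longleftrightarrow> {} \<in> S" if "A \<subseteq> {..<n}" for A
  proof -
    have "finite A" using that finite_subset by blast
    then show ?thesis using that
    proof (induction A rule: finite_induct)
      case (insert x F)
      have "{F, insert x F} \<in> hypercube_edges n" using insert by (auto simp: hypercube_edges_iff)
      then show ?case using closed_sets_edge[OF S] insert by auto
    qed simp
  qed
  moreover have "S \<subseteq> Pow {..<n}" using S by (auto simp: closed_sets_def)
  ultimately show ?thesis by blast
qed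

text \<open>Lower bound: a weakly saturated graph has the two closed sets of \<open>Q_n\<close>, so it has at
  least \<open>2^n - 1\<close> edges.\<close>

lemma weakly_saturated_card:
  assumes "weakly_saturated n G"
  shows "2 ^ n \<le> card G + 1"
proof -
  let ?V = "Pow {..<n}"
  from assms obtain es where G: "G \<subseteq> hypercube_edges n" and es: "set es = hypercube_edges n - G"
    and creates: "\<forall>k < length es. creates_new_C4 (G \<union> set (take k es)) (es ! k)"
    unfolding weakly_saturated_def by blast
  have "closed_sets ?V G = closed_sets ?V (G \<union> set es)"
    using closed_sets_saturation[OF creates] by (rule sym)
  also have "G \<union> set es = hypercube_edges n" using es G by blast
  finally have "closed_sets ?V G \<subseteq> {{}, ?V}" using closed_sets_hypercube by blast
  then have "card (closed_sets ?V G) \<le> card {{}, ?V}" by (rule card_mono[rotated]) simp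
  also have "\<dots> \<le> 2" by (simp add: card_insert_if)
  finally have two: "card (closed_sets ?V G) \<le> 2" .
  have "finite G" using G finite_hypercube_edges finite_subset by blast
  then have "card (Pow ?V) \<le> 2 ^ card G * card (closed_sets ?V G)"
    using card_Pow_le_closed_sets[of ?V G] by simp
  also have "\<dots> \<le> 2 ^ (card G + 1)" using two by simp
  finally have "(2::nat) ^ (2 ^ n) \<le> 2 ^ (card G + 1)" by (simp add: card_Pow)
  then show ?thesis by (rule power_le_imp_le_exp[rotated]) simp
qed

section \<open>A weakly saturated spanning tree\<close>

definition tree_edges :: "nat \<Rightarrow> nat set set set" where
  "tree_edges n = (\<lambda>B. {B - {Max B}, B}) ` (Pow {..<n} - {{}})"

lemma hypercube_edge_eq:
  assumes "i \<notin> A" "i' \<notin> A'" "{A, insert i A} = {A', insert i' A'}"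
  shows "A = A' \<and> i = i'"
  using assms by (auto simp: doubleton_eq_iff)

lemma tree_edge_iff:
  assumes "A \<subseteq> {..<n}" "i < n" "i \<notin> A"
  shows "{A, insert i A} \<in> tree_edges n \<longleftrightarrow> (\<forall>j\<in>A. j < i)"
proof
  assume "{A, insert i A} \<in> tree_edges n"
  then obtain B where e: "{A, insert i A} = {B - {Max B}, B}" and "B \<in> Pow {..<n} - {{}}"
    unfolding tree_edges_def by (rule imageE)
  then have B: "B \<subseteq> {..<n}" "B \<noteq> {}" by auto
  have fin: "finite B" by (rule finite_subset[OF B(1)]) simp
  have "insert (Max B) (B - {Max B}) = B" using Max_in[OF fin B(2)] by blast
  then have eq: "{A, insert i A} = {B - {Max B}, insert (Max B) (B - {Max B})}" using e by simp
  have "A = B - {Max B} \<and> i = Max B" by (rule hypercube_edge_eq[OF assms(3) _ eq]) simp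
  then show "\<forall>j\<in>A. j < i" using Max_ge[OF fin] by fastforce
next
  assume below: "\<forall>j\<in>A. j < i"
  have "finite A" by (rule finite_subset[OF assms(1)]) simp
  then have "Max (insert i A) = i" using below by (intro Max_eqI) (auto simp: less_imp_le)
  moreover have "insert i A - {i} = A" using assms(3) by blast
  ultimately have "{A, insert i A} = (\<lambda>B. {B - {Max B}, B}) (insert i A)" by simp
  moreover have "insert i A \<in> Pow {..<n} - {{}}" using assms(1,2) by blast
  ultimately show "{A, insert i A} \<in> tree_edges n" unfolding tree_edges_def by simp
qed

lemma tree_edges_subset: "tree_edges n \<subseteq> hypercube_edges n"
proof
  fix e assume "e \<in> tree_edges n"
  then obtain B where e: "e = {B - {Max B}, B}" and B: "B \<subseteq> {..<n}" "B \<noteq> {}"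
    unfolding tree_edges_def by blast
  have m: "Max B \<in> B" using B finite_subset by (intro Max_in) auto
  then have "e = {B - {Max B}, insert (Max B) (B - {Max B})}" using e by (simp add: insert_absorb)
  then show "e \<in> hypercube_edges n" unfolding hypercube_edges_iff using B m by blast
qed

lemma card_tree_edges: "card (tree_edges n) = 2 ^ n - 1"
proof -
  have "inj_on (\<lambda>B. {B - {Max B}, B}) (Pow {..<n} - {{}})"
  proof (rule inj_onI)
    fix B B' assume "{B - {Max B}, B} = {B' - {Max B'}, B'}"
    then have "\<Union>{B - {Max B}, B} = \<Union>{B' - {Max B'}, B'}" by simp
    then show "B = B'" by auto
  qed
  then have "card (tree_edges n) = card (Pow {..<n} - {{}})"
    unfolding tree_edges_def by (rule card_image)
  also have "\<dots> = 2 ^ n - 1" by (simp add: card_Pow)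
  finally show ?thesis .
qed

text \<open>Key step of the upper bound: a non-tree edge \<open>{A, A + i}\<close> (so \<open>i < m = max A\<close>) closes
  the 4-cycle \<open>A, A + i, B + i, B\<close> with \<open>B = A - {m}\<close>, whose edges \<open>{B + i, A + i}\<close> and
  \<open>{B, A}\<close> are tree edges and \<open>{B, B + i}\<close> is a tree edge or has a smaller lower endpoint.\<close>

lemma non_tree_edge_closes_C4:
  assumes "e \<in> hypercube_edges n - tree_edges n"
  shows "closes_C4 (tree_edges n \<union> {e' \<in> hypercube_edges n - tree_edges n. card (\<Inter>e') < card (\<Inter>e)}) e"
proof -
  let ?H = "tree_edges n \<union> {e' \<in> hypercube_edges n - tree_edges n. card (\<Inter>e') < card (\<Inter>e)}"
  have edge: "e \<in> hypercube_edges n" and not_tree: "e \<notin> tree_edges n" using assms by auto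
  from edge obtain A i where e: "e = {A, insert i A}" and A: "A \<subseteq> {..<n}" "i < n" "i \<notin> A"
    unfolding hypercube_edges_iff by blast
  have fin: "finite A" by (rule finite_subset[OF A(1)]) simp
  obtain j where j: "j \<in> A" "\<not> j < i" using not_tree tree_edge_iff[OF A] e by blast
  define m where "m = Max A"
  have mA: "m \<in> A" unfolding m_def using fin j(1) by (intro Max_in) auto
  have "j \<le> m" unfolding m_def using fin j(1) by (rule Max_ge)
  then have im: "i < m" using j(2) mA A(3) by (cases "i = m") auto
  define B where "B = A - {m}"
  have AB: "A = insert m B" "m \<notin> B" using mA unfolding B_def by auto
  have B_below: "\<forall>k\<in>B. k < m" using Max_ge[OF fin] unfolding B_def m_def by fastforce
  have iB: "i \<notin> B" and Bn: "B \<subseteq> {..<n}" and mn: "m < n"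
    using A mA unfolding B_def by auto
  have rank_e: "card (\<Inter>e) = card A" unfolding e by (simp add: Int_absorb2 subset_insertI)
  have new: "e \<notin> ?H" using not_tree by simp
  have tree_top: "{insert i A, insert i B} \<in> ?H"
  proof -
    have "{insert i B, insert m (insert i B)} \<in> tree_edges n"
      using tree_edge_iff[of "insert i B" n m] B_below im A(2) Bn AB(2) mn by auto
    then show ?thesis using AB(1) by (simp add: insert_commute)
  qed
  have smaller: "{insert i B, B} \<in> ?H"
  proof (cases "{B, insert i B} \<in> tree_edges n")
    case False
    have "{B, insert i B} \<in> hypercube_edges n" unfolding hypercube_edges_iff using Bn A(2) iB by blast
    moreover have "card (\<Inter>{B, insert i B}) < card (\<Inter>e)"
      using fin AB rank_e by (simp add: Int_absorb2 subset_insertI)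
    ultimately show ?thesis using False by (simp add: insert_commute)
  qed (simp add: insert_commute)
  have tree_bottom: "{B, A} \<in> ?H" using tree_edge_iff[OF Bn mn AB(2)] B_below AB(1) by simp
  have "distinct [A, insert i A, insert i B, B]" using AB A(3) im iB by auto
  then show ?thesis by (rule closes_C4I[OF new _ e tree_top smaller tree_bottom])
qed

text \<open>Upper bound: the spanning tree is weakly saturated, adding the other edges by the size
  of their lower endpoint \<open>\<Inter>e\<close>.\<close>

lemma tree_edges_weakly_saturated: "weakly_saturated n (tree_edges n)"
proof -
  let ?R = "hypercube_edges n - tree_edges n"
  obtain es where es: "distinct es" "set es = ?R"
    "\<forall>k < length es. closes_C4 (tree_edges n \<union> set (take k es)) (es ! k)"
    using closing_order_by_rank[of ?R "tree_edges n" "\<lambda>e. card (\<Inter>e)"]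
      finite_hypercube_edges non_tree_edge_closes_C4 by blast
  then show ?thesis
    unfolding weakly_saturated_def creates_new_C4_iff using tree_edges_subset by blast
qed

theorem mainTheorem12:
  fixes n :: nat
  assumes "n \<ge> 1"
  shows "wsat_Qn_Q2 n = 2 ^ n - 1"
  unfolding wsat_Qn_Q2_def
proof (rule Least_equality)
  show "\<exists>G. weakly_saturated n G \<and> card G = 2 ^ n - 1"
    using tree_edges_weakly_saturated card_tree_edges by blast
next
  fix m assume "\<exists>G. weakly_saturated n G \<and> card G = m"
  then show "2 ^ n - 1 \<le> m" using weakly_saturated_card by fastforce
qed

end
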